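(* Let $G, H$ and $G_1,\dots,G_n$ be abelian groups with tiles $T \subset G$ and $U_i \subset G_i$, and let $\rho : G \to H$ be a surjective homomorphism that is injective on $T$. If $G_1\times\dots\times G_n\times H$ is $(U_1,\dots,U_n,\rho(T))$-tilable, then $G_1\times\dots\times G_n\times G$ is $(U_1,\dots,U_n,T)$-tilable.
   Context: A tile in an abelian group is a non-empty subset. Given abelian groups $K_1,\dots,K_r$ and tiles $V_j\subset K_j$, let $\mathsf{V}_j \subset K_1\times\dots\times K_r$ be the set of points whose $j$-th coordinate lies in $V_j$ and whose other coordinates are $0$. A copy of $V_j$ is a translate $\mathsf{V}_j + x$ with $x \in K_1\times\dots\times K_r$. A subset of $K_1\times\dots\times K_r$ is $(V_1,\dots,V_r)$-tilable if it is a disjoint union of copies of $V_1,\dots,V_r$. *)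

theory Defs
  imports "HOL-Algebra.Algebra"
begin

text \<open>Points are pairs (x, g)
  with x in the extensional product of the carriers of G_0..G_(n-1) (indices shifted to
  start at 0) and g in carrier L.\<close>

definition prod_carrier ::
  "nat \<Rightarrow> (nat \<Rightarrow> ('a,'m) monoid_scheme) \<Rightarrow> ('b,'n) monoid_scheme \<Rightarrow> ((nat \<Rightarrow> 'a) \<times> 'b) set" where
  "prod_carrier n Gs L = (PiE {..<n} (\<lambda>i. carrier (Gs i))) \<times> carrier L"

definition copies ::
  "nat \<Rightarrow> (nat \<Rightarrow> ('a,'m) monoid_scheme) \<Rightarrow> (nat \<Rightarrow> 'a set) \<Rightarrow> ('b,'n) monoid_scheme \<Rightarrow> 'b set
   \<Rightarrow> ((nat \<Rightarrow> 'a) \<times> 'b) set set" where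
  "copies n Gs U L T =
     {{(x(j := x j \<otimes>\<^bsub>Gs j\<^esub> u), g) | u. u \<in> U j} | j x g.
        j < n \<and> x \<in> PiE {..<n} (\<lambda>i. carrier (Gs i)) \<and> g \<in> carrier L}
   \<union> {{(x, g \<otimes>\<^bsub>L\<^esub> t) | t. t \<in> T} | x g.
        x \<in> PiE {..<n} (\<lambda>i. carrier (Gs i)) \<and> g \<in> carrier L}"

definition tilable ::
  "nat \<Rightarrow> (nat \<Rightarrow> ('a,'m) monoid_scheme) \<Rightarrow> (nat \<Rightarrow> 'a set) \<Rightarrow> ('b,'n) monoid_scheme \<Rightarrow> 'b set
   \<Rightarrow> ((nat \<Rightarrow> 'a) \<times> 'b) set \<Rightarrow> bool" where
  "tilable n Gs U L T S \<longleftrightarrow>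
     (\<exists>C. C \<subseteq> copies n Gs U L T \<and> pairwise disjnt C \<and> \<Union>C = S)"

end

theory Submission
  imports Defs
begin

text \<open>Pull the given tiling back along id \<times> \<rho>. The preimage of a copy of U j at (x, y) is
  the disjoint union of the copies of U j at (x, g) over the fibre of \<rho> above y. The preimage
  of a copy {x} \<times> y \<rho>(T) is the disjoint union of the copies {x} \<times> g T over the same fibre:
  if \<rho> g' = y \<rho> t then g' lies in (g' t\<inverse>) T, and two such translates meet only if they
  coincide, because \<rho> is injective on T. Refining every tile of a partition by a partition
  of its preimage yields a partition of the whole group.\<close>

lemma partition_refine_vimage:
  assumes "pairwise disjnt C" "\<Union>C = B" "f ` A \<subseteq> B"
    and "\<And>E. E \<in> C \<Longrightarrow> \<exists>L \<subseteq> K. pairwise disjnt L \<and> \<Union>L = A \<inter> f -` E"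
  shows "\<exists>L \<subseteq> K. pairwise disjnt L \<and> \<Union>L = A"
proof -
  have "\<forall>E\<in>C. \<exists>L. L \<subseteq> K \<and> pairwise disjnt L \<and> \<Union>L = A \<inter> f -` E"
    using assms(4) by blast
  then obtain L where L: "\<forall>E\<in>C. L E \<subseteq> K \<and> pairwise disjnt (L E) \<and> \<Union>(L E) = A \<inter> f -` E"
    by metis
  have "pairwise disjnt (\<Union>E\<in>C. L E)"
  proof (rule pairwiseI)
    fix D1 D2 assume "D1 \<in> (\<Union>E\<in>C. L E)" "D2 \<in> (\<Union>E\<in>C. L E)" "D1 \<noteq> D2"
    then obtain E1 E2 where E: "E1 \<in> C" "D1 \<in> L E1" "E2 \<in> C" "D2 \<in> L E2" by blast
    show "disjnt D1 D2"
    proof (cases "E1 = E2")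
      case True
      then show ?thesis using E L \<open>D1 \<noteq> D2\<close> by (metis pairwiseD)
    next
      case False
      then have "disjnt (f -` E1) (f -` E2)"
        using E(1,3) assms(1) by (auto simp: pairwise_def disjnt_def)
      moreover have "D1 \<subseteq> f -` E1" "D2 \<subseteq> f -` E2" using E L by blast+
      ultimately show ?thesis by (meson disjnt_subset1 disjnt_subset2)
    qed
  qed
  moreover have "\<Union>(\<Union>E\<in>C. L E) = A"
  proof -
    have "\<Union>(\<Union>E\<in>C. L E) = (\<Union>E\<in>C. \<Union>(L E))"
      by blast
    also have "\<dots> = (\<Union>E\<in>C. A \<inter> f -` E)"
      using L by simp
    also have "\<dots> = A"
      using assms(2,3) by auto
    finally show ?thesis .
  qed
  ultimately show ?thesis using L by (intro exI[of _ "\<Union>E\<in>C. L E"]) auto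
qed

lemma (in group_hom) vimage_l_coset_image:
  assumes "T \<subseteq> carrier G" "y \<in> carrier H"
  shows "carrier G \<inter> h -` (l_coset H y (h ` T)) = (\<Union>g \<in> carrier G \<inter> h -` {y}. l_coset G g T)"
proof (intro equalityI subsetI)
  fix g' assume "g' \<in> carrier G \<inter> h -` (l_coset H y (h ` T))"
  then obtain t where t: "g' \<in> carrier G" "t \<in> T" "h g' = y \<otimes>\<^bsub>H\<^esub> h t"
    by (auto simp: l_coset_def)
  have tG: "t \<in> carrier G" using t(2) assms(1) by blast
  have "h (g' \<otimes> inv t) = y"
    using t tG assms(2) by (simp add: H.m_assoc)
  moreover have "g' = (g' \<otimes> inv t) \<otimes> t"
    using t(1) tG by (simp add: G.m_assoc)
  ultimately show "g' \<in> (\<Union>g \<in> carrier G \<inter> h -` {y}. l_coset G g T)"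
    using t tG by (auto simp: l_coset_def)
next
  fix g' assume "g' \<in> (\<Union>g \<in> carrier G \<inter> h -` {y}. l_coset G g T)"
  then obtain g t where "g \<in> carrier G" "h g = y" "t \<in> T" "g' = g \<otimes> t"
    by (auto simp: l_coset_def)
  moreover have "t \<in> carrier G" using \<open>t \<in> T\<close> assms(1) by blast
  ultimately show "g' \<in> carrier G \<inter> h -` (l_coset H y (h ` T))"
    by (auto simp: l_coset_def)
qed

lemma (in group_hom) disjoint_family_l_cosets_fibre:
  assumes "T \<subseteq> carrier G" "inj_on h T"
  shows "disjoint_family_on (\<lambda>g. l_coset G g T) (carrier G \<inter> h -` {y})"
  unfolding disjoint_family_on_def
proof (intro ballI impI)
  fix g1 g2 assume g: "g1 \<in> carrier G \<inter> h -` {y}" "g2 \<in> carrier G \<inter> h -` {y}" "g1 \<noteq> g2"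
  show "l_coset G g1 T \<inter> l_coset G g2 T = {}"
  proof (rule ccontr)
    assume "l_coset G g1 T \<inter> l_coset G g2 T \<noteq> {}"
    then obtain t1 t2 where t: "t1 \<in> T" "t2 \<in> T" "g1 \<otimes> t1 = g2 \<otimes> t2"
      by (auto simp: l_coset_def)
    have tG: "t1 \<in> carrier G" "t2 \<in> carrier G" using t assms(1) by blast+
    have "h g1 \<otimes>\<^bsub>H\<^esub> h t1 = h g1 \<otimes>\<^bsub>H\<^esub> h t2"
      using arg_cong[OF t(3), of h] g tG by simp
    then have "h t1 = h t2" using g(1) tG H.l_cancel by (meson IntD1 hom_closed)
    then have "t1 = t2" using assms(2) t by (meson inj_onD)
    then show False using t(3) g tG G.r_cancel by blast
  qed
qed

lemma mem_copies_iff: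
  fixes Gs :: "nat \<Rightarrow> ('a,'m) monoid_scheme" and L :: "('b,'n) monoid_scheme"
  shows
  "E \<in> copies n Gs U L T \<longleftrightarrow>
     (\<exists>j x g. j < n \<and> x \<in> PiE {..<n} (\<lambda>i. carrier (Gs i)) \<and> g \<in> carrier L \<and>
        E = (\<lambda>u. x(j := x j \<otimes>\<^bsub>Gs j\<^esub> u)) ` U j \<times> {g})
   \<or> (\<exists>x g. x \<in> PiE {..<n} (\<lambda>i. carrier (Gs i)) \<and> g \<in> carrier L \<and> E = {x} \<times> l_coset L g T)"
proof -
  have U_copy_eq: "{(x(j := x j \<otimes>\<^bsub>Gs j\<^esub> u), g) | u. u \<in> U j} = (\<lambda>u. x(j := x j \<otimes>\<^bsub>Gs j\<^esub> u)) ` U j \<times> {g}"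
    for j and x :: "nat \<Rightarrow> 'a" and g by blast
  have T_copy_eq: "{(x, g \<otimes>\<^bsub>L\<^esub> t) | t. t \<in> T} = {x} \<times> l_coset L g T" for x :: "nat \<Rightarrow> 'a" and g
    by (auto simp: l_coset_def)
  show ?thesis unfolding copies_def U_copy_eq T_copy_eq by blast
qed

lemma (in group_hom) copy_vimage_tilable:
  assumes "T \<subseteq> carrier G" "inj_on h T"
    and "E \<in> copies n Gs U H (h ` T)" "E \<subseteq> prod_carrier n Gs H"
  shows "tilable n Gs U G T (prod_carrier n Gs G \<inter> map_prod id h -` E)"
proof -
  define PI where "PI = PiE {..<n} (\<lambda>i. carrier (Gs i))"
  define fibre where "fibre y = carrier G \<inter> h -` {y}" for y
  consider (U_copy) j x y where "j < n" "x \<in> PI" "y \<in> carrier H"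
      "E = (\<lambda>u. x(j := x j \<otimes>\<^bsub>Gs j\<^esub> u)) ` U j \<times> {y}"
    | (T_copy) x y where "x \<in> PI" "y \<in> carrier H" "E = {x} \<times> l_coset H y (h ` T)"
    using assms(3) unfolding mem_copies_iff PI_def by blast
  then show ?thesis
  proof cases
    case U_copy
    define V where "V = (\<lambda>u. x(j := x j \<otimes>\<^bsub>Gs j\<^esub> u)) ` U j"
    define L where "L = (\<lambda>g. V \<times> {g}) ` fibre y"
    have "V \<times> {g} \<in> copies n Gs U G T" if "g \<in> carrier G" for g
      unfolding mem_copies_iff PI_def[symmetric] V_def using U_copy(1,2) that by blast
    then have "L \<subseteq> copies n Gs U G T"
      unfolding L_def fibre_def by blast
    moreover have "pairwise disjnt L"
      unfolding L_def by (rule disjoint_family_on_disjoint_image) (auto simp: disjoint_family_on_def)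
    moreover have "\<Union>L = prod_carrier n Gs G \<inter> map_prod id h -` E"
    proof -
      have "V \<subseteq> PI"
        using assms(4) U_copy(4) unfolding V_def prod_carrier_def PI_def by blast
      then show ?thesis
        using U_copy(4) unfolding L_def fibre_def prod_carrier_def PI_def[symmetric] V_def[symmetric]
        by auto
    qed
    ultimately show ?thesis unfolding tilable_def by blast
  next
    case T_copy
    define L where "L = (\<lambda>g. {x} \<times> l_coset G g T) ` fibre y"
    have "{x} \<times> l_coset G g T \<in> copies n Gs U G T" if "g \<in> carrier G" for g
      unfolding mem_copies_iff PI_def[symmetric] using T_copy(1) that by blast
    then have "L \<subseteq> copies n Gs U G T"
      unfolding L_def fibre_def by blast
    moreover have "pairwise disjnt L"
      unfolding L_def
      using disjoint_family_l_cosets_fibre[OF assms(1,2), of y]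
      by (intro disjoint_family_on_disjoint_image) (auto simp: disjoint_family_on_def fibre_def)
    moreover have "\<Union>L = prod_carrier n Gs G \<inter> map_prod id h -` E"
    proof -
      have "\<Union>L = {x} \<times> (carrier G \<inter> h -` l_coset H y (h ` T))"
        unfolding L_def fibre_def vimage_l_coset_image[OF assms(1) T_copy(2)] by blast
      then show ?thesis
        using T_copy(1,3) unfolding prod_carrier_def PI_def[symmetric] by auto
    qed
    ultimately show ?thesis unfolding tilable_def by blast
  qed
qed

theorem proposition17:
  fixes n :: nat
    and Gs :: "nat \<Rightarrow> ('a,'m) monoid_scheme" and U :: "nat \<Rightarrow> 'a set"
    and G :: "('b,'n) monoid_scheme" and T :: "'b set"
    and H :: "('c,'k) monoid_scheme" and \<rho> :: "'b \<Rightarrow> 'c"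
  assumes "\<And>i. i < n \<Longrightarrow> comm_group (Gs i)"
    and "\<And>i. i < n \<Longrightarrow> U i \<subseteq> carrier (Gs i) \<and> U i \<noteq> {}"
    and "comm_group G" and "comm_group H"
    and "T \<subseteq> carrier G" and "T \<noteq> {}"
    and "\<rho> \<in> hom G H" and "\<rho> ` carrier G = carrier H"
    and "inj_on \<rho> T"
    and "tilable n Gs U H (\<rho> ` T) (prod_carrier n Gs H)"
  shows "tilable n Gs U G T (prod_carrier n Gs G)"
proof -
  interpret group_hom G H \<rho>
    using assms(3,4,7) by (simp add: group_hom_def group_hom_axioms_def comm_group.axioms(2))
  obtain C where C: "C \<subseteq> copies n Gs U H (\<rho> ` T)" "pairwise disjnt C" "\<Union>C = prod_carrier n Gs H"
    using assms(10) unfolding tilable_def by blast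
  have image: "map_prod id \<rho> ` prod_carrier n Gs G \<subseteq> prod_carrier n Gs H"
    unfolding prod_carrier_def map_prod_def by (auto simp: image_subset_iff)
  have "tilable n Gs U G T (prod_carrier n Gs G \<inter> map_prod id \<rho> -` E)" if "E \<in> C" for E
  proof (rule copy_vimage_tilable[OF assms(5,9)])
    show "E \<in> copies n Gs U H (\<rho> ` T)" "E \<subseteq> prod_carrier n Gs H"
      using C(1,3) that by blast+
  qed
  then show ?thesis
    unfolding tilable_def by (rule partition_refine_vimage[OF C(2,3) image])
qed

end
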